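(* Let $\widehat A=\mathbb{C}[[x,y,z]]$ and let $F=(f,g,h)$ and $F'=(f',g',h')$ be Poisson triples on $\widehat A$ with $f_{000}\neq 0$. If $f_{ijk}=f'_{ijk}$ and $h_{ijk}=h'_{ijk}$ for all $i,j,k\in\mathbb{N}_0$ and $g_{ij0}=g'_{ij0}$ for all $i,j\in\mathbb{N}_0$, then $F=F'$.
   Context: For $f\in\widehat A$, $f_{ijk}$ denotes the coefficient of $x^iy^jz^k$. $F=(f,g,h)\in\widehat A^3$ is a Poisson triple if there is a Poisson bracket on $\widehat A$ (Lie bracket with each $\{b,-\}$ a $\mathbb{C}$-derivation) such that $\{y,z\}=f$, $\{z,x\}=g$, $\{x,y\}=h$. *)

theory Defs
  imports "HOL-Computational_Algebra.Formal_Power_Series"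
begin

text \<open>The ring C[[x,y,z]] realised as iterated formal power series: x is the outer
variable, then y, then z.\<close>

type_synonym A3 = "complex fps fps fps"

definition coeff3 :: "A3 \<Rightarrow> nat \<Rightarrow> nat \<Rightarrow> nat \<Rightarrow> complex" where
  "coeff3 f i j k = fps_nth (fps_nth (fps_nth f i) j) k"

definition X3 :: A3 where "X3 = fps_X"
definition Y3 :: A3 where "Y3 = fps_const fps_X"
definition Z3 :: A3 where "Z3 = fps_const (fps_const fps_X)"

definition scal3 :: "complex \<Rightarrow> A3" where
  "scal3 c = fps_const (fps_const (fps_const c))"

definition is_derivation :: "(A3 \<Rightarrow> A3) \<Rightarrow> bool" where
  "is_derivation D \<longleftrightarrow>
     (\<forall>a b. D (a + b) = D a + D b) \<and>
     (\<forall>c a. D (scal3 c * a) = scal3 c * D a) \<and>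
     (\<forall>a b. D (a * b) = a * D b + b * D a)"

definition lie_bracket :: "(A3 \<Rightarrow> A3 \<Rightarrow> A3) \<Rightarrow> bool" where
  "lie_bracket P \<longleftrightarrow>
     (\<forall>a b c. P (a + b) c = P a c + P b c) \<and>
     (\<forall>a b c. P a (b + c) = P a b + P a c) \<and>
     (\<forall>s a b. P (scal3 s * a) b = scal3 s * P a b) \<and>
     (\<forall>s a b. P a (scal3 s * b) = scal3 s * P a b) \<and>
     (\<forall>a. P a a = 0) \<and>
     (\<forall>a b c. P a (P b c) + P b (P c a) + P c (P a b) = 0)"

definition poisson_bracket :: "(A3 \<Rightarrow> A3 \<Rightarrow> A3) \<Rightarrow> bool" where
  "poisson_bracket P \<longleftrightarrow> lie_bracket P \<and> (\<forall>b. is_derivation (P b))"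

definition poisson_triple :: "A3 \<Rightarrow> A3 \<Rightarrow> A3 \<Rightarrow> bool" where
  "poisson_triple f g h \<longleftrightarrow>
     (\<exists>P. poisson_bracket P \<and> P Y3 Z3 = f \<and> P Z3 X3 = g \<and> P X3 Y3 = h)"

end

theory Submission
  imports Defs
begin

text \<open>By the chain rule, a derivation of \<open>\<complex>[[x,y,z]]\<close> is determined by its values on
  \<open>x, y, z\<close>; so the Jacobi identity for \<open>x, y, z\<close> says \<open>F \<cdot> curl F = 0\<close>. When \<open>F\<close> and
  \<open>F'\<close> share \<open>f\<close> and \<open>h\<close>, the difference \<open>d = g - g'\<close> therefore solves the linear equation
  \<open>f \<partial>\<^sub>z d - h \<partial>\<^sub>x d + (\<partial>\<^sub>x h - \<partial>\<^sub>z f) d = 0\<close>. If \<open>d = z\<^sup>m\<^sup>+\<^sup>1 e\<close>, this gives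
  \<open>(m + 1) f e \<equiv> 0\<close> modulo \<open>z\<close>, and \<open>z\<close> is prime and does not divide \<open>f\<close>, so \<open>z\<close> divides \<open>e\<close>.
  Since \<open>d\<close> vanishes at \<open>z = 0\<close>, every power of \<open>z\<close> divides \<open>d\<close>, hence \<open>d = 0\<close>.\<close>

unbundle fps_syntax

definition fps_map :: "('a \<Rightarrow> 'b) \<Rightarrow> 'a fps \<Rightarrow> 'b fps" where
  "fps_map \<phi> a = Abs_fps (\<lambda>n. \<phi> (a $ n))"

lemma fps_map_nth [simp]: "fps_map \<phi> a $ n = \<phi> (a $ n)"
  by (simp add: fps_map_def)

lemma additive_fps_map: "additive \<phi> \<Longrightarrow> additive (fps_map \<phi>)"
  by (auto simp: additive_def fps_eq_iff)

lemma fps_map_mult: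
  fixes \<phi> :: "'a::comm_ring_1 \<Rightarrow> 'b::comm_ring_1"
  assumes "additive \<phi>" and "\<And>x y. \<phi> (x * y) = \<phi> x * \<phi> y"
  shows "fps_map \<phi> (a * b) = fps_map \<phi> a * fps_map \<phi> b"
  by (rule fps_ext) (simp add: fps_mult_nth additive.sum[OF assms(1)] assms(2))

lemma fps_map_leibniz:
  fixes \<phi> :: "'a::comm_ring_1 \<Rightarrow> 'a"
  assumes "additive \<phi>" and "\<And>x y. \<phi> (x * y) = x * \<phi> y + y * \<phi> x"
  shows "fps_map \<phi> (a * b) = a * fps_map \<phi> b + b * fps_map \<phi> a"
proof (rule fps_ext)
  fix n
  have "fps_map \<phi> (a * b) $ n = (\<Sum>i=0..n. a $ i * \<phi> (b $ (n - i)) + \<phi> (a $ i) * b $ (n - i))"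
    by (simp add: fps_mult_nth additive.sum[OF assms(1)] assms(2) mult.commute)
  also have "\<dots> = (a * fps_map \<phi> b + b * fps_map \<phi> a) $ n"
    by (simp add: fps_mult_nth sum.distrib mult.commute[of b])
  finally show "fps_map \<phi> (a * b) $ n = (a * fps_map \<phi> b + b * fps_map \<phi> a) $ n" .
qed

lemma fps_X_power_split:
  fixes f :: "'a::comm_ring_1 fps"
  shows "f = (\<Sum>i<n. fps_X ^ i * fps_const (f $ i)) + fps_X ^ n * fps_shift n f"
proof -
  have "fps_cutoff n f = (\<Sum>i<n. fps_X ^ i * fps_const (f $ i))"
    by (rule fps_ext) (simp add: fps_sum_nth fps_X_power_mult_nth if_distrib[where f="\<lambda>x. x * _"] cong: if_cong)
  then show ?thesis
    using fps_shift_cutoff'[of n f] by (simp add: add.commute)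
qed

lemma fps_const_sum: "fps_const (sum g A :: 'a::comm_ring_1) = (\<Sum>i\<in>A. fps_const (g i))"
  by (induction A rule: infinite_finite_induct) (simp_all flip: fps_const_add)

lemma coeff3_ext: "(\<And>i j k. coeff3 a i j k = coeff3 b i j k) \<Longrightarrow> a = b"
  by (simp add: coeff3_def fps_eq_iff)

lemma coeff3_X3_power_mult: "coeff3 (X3 ^ n * a) i j k = (if i < n then 0 else coeff3 a (i - n) j k)"
  by (simp add: coeff3_def X3_def fps_X_power_mult_nth)

lemma coeff3_Y3_power_mult: "coeff3 (Y3 ^ n * a) i j k = (if j < n then 0 else coeff3 a i (j - n) k)"
  by (simp add: coeff3_def Y3_def fps_X_power_mult_nth)

lemma coeff3_Z3_power_mult: "coeff3 (Z3 ^ n * a) i j k = (if k < n then 0 else coeff3 a i j (k - n))"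
  by (simp add: coeff3_def Z3_def fps_X_power_mult_nth)

definition dx :: "A3 \<Rightarrow> A3" where "dx = fps_deriv"
definition dy :: "A3 \<Rightarrow> A3" where "dy = fps_map fps_deriv"
definition dz :: "A3 \<Rightarrow> A3" where "dz = fps_map (fps_map fps_deriv)"

lemma additive_fps_deriv: "additive fps_deriv"
  by (simp add: additive_def)

lemma fps_map_deriv_mult:
  "fps_map fps_deriv (a * b) = a * fps_map fps_deriv b + b * fps_map fps_deriv (a :: 'a::comm_ring_1 fps fps)"
  by (rule fps_map_leibniz) (simp_all add: additive_fps_deriv)

interpretation dx: additive dx
  by (simp add: dx_def additive_fps_deriv)

interpretation dy: additive dy
  by (simp add: dy_def additive_fps_map additive_fps_deriv)

interpretation dz: additive dz
  by (simp add: dz_def additive_fps_map additive_fps_deriv)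

lemma dx_mult [simp]: "dx (a * b) = a * dx b + b * dx a"
  by (simp add: dx_def)

lemma dy_mult [simp]: "dy (a * b) = a * dy b + b * dy a"
  by (simp add: dy_def fps_map_deriv_mult)

lemma dz_mult [simp]: "dz (a * b) = a * dz b + b * dz a"
  unfolding dz_def
  by (rule fps_map_leibniz) (simp_all add: additive_fps_map additive_fps_deriv fps_map_deriv_mult)

lemma dx_simps [simp]: "dx X3 = 1" "dx Y3 = 0" "dx Z3 = 0" "dx (scal3 c) = 0" "dx 1 = 0"
  by (simp_all add: dx_def X3_def Y3_def Z3_def scal3_def)

lemma dy_simps [simp]: "dy X3 = 0" "dy Y3 = 1" "dy Z3 = 0" "dy (scal3 c) = 0" "dy 1 = 0"
  by (simp_all add: dy_def X3_def Y3_def Z3_def scal3_def fps_eq_iff fps_X_nth)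

lemma dz_simps [simp]: "dz X3 = 0" "dz Y3 = 0" "dz Z3 = 1" "dz (scal3 c) = 0" "dz 1 = 0"
  by (simp_all add: dz_def X3_def Y3_def Z3_def scal3_def fps_eq_iff fps_X_nth)

text \<open>Membership in the ideal \<open>(x\<^sup>N, y\<^sup>N, z\<^sup>N)\<close>.\<close>

definition coeffs_vanish_below :: "nat \<Rightarrow> A3 \<Rightarrow> bool" where
  "coeffs_vanish_below N a \<longleftrightarrow> (\<forall>i<N. \<forall>j<N. \<forall>k<N. coeff3 a i j k = 0)"

lemma coeffs_vanish_below_add:
  "coeffs_vanish_below N a \<Longrightarrow> coeffs_vanish_below N b \<Longrightarrow> coeffs_vanish_below N (a + b)"
  by (simp add: coeffs_vanish_below_def coeff3_def)

lemma coeffs_vanish_below_0: "coeffs_vanish_below N 0"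
  by (simp add: coeffs_vanish_below_def coeff3_def)

lemma coeffs_vanish_below_sum:
  "(\<And>i. i \<in> A \<Longrightarrow> coeffs_vanish_below N (g i)) \<Longrightarrow> coeffs_vanish_below N (sum g A)"
  by (induction A rule: infinite_finite_induct) (simp_all add: coeffs_vanish_below_0 coeffs_vanish_below_add)

lemma coeffs_vanish_below_power_mult:
  assumes "coeffs_vanish_below N a"
  shows "coeffs_vanish_below N (X3 ^ n * a)" "coeffs_vanish_below N (Y3 ^ n * a)"
    "coeffs_vanish_below N (Z3 ^ n * a)"
  using assms
  by (simp_all add: coeffs_vanish_below_def coeff3_X3_power_mult coeff3_Y3_power_mult coeff3_Z3_power_mult)

lemma coeffs_vanish_below_Nth_power_mult:
  "coeffs_vanish_below N (X3 ^ N * a)" "coeffs_vanish_below N (Y3 ^ N * a)"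
  "coeffs_vanish_below N (Z3 ^ N * a)"
  by (simp_all add: coeffs_vanish_below_def coeff3_X3_power_mult coeff3_Y3_power_mult coeff3_Z3_power_mult)

lemma coeffs_vanish_below_all:
  assumes "\<And>N. coeffs_vanish_below N a"
  shows "a = 0"
proof (rule coeff3_ext)
  fix i j k
  show "coeff3 a i j k = coeff3 0 i j k"
    using assms[of "Suc (i + j + k)"] by (simp add: coeffs_vanish_below_def coeff3_def)
qed

context
  fixes D :: "A3 \<Rightarrow> A3"
  assumes D: "is_derivation D"
begin

interpretation additive D
  using D by (simp add: is_derivation_def additive_def)

lemma derivation_add: "D (a + b) = D a + D b"
  by (fact add)

lemma derivation_sum: "D (sum g A) = (\<Sum>i\<in>A. D (g i))"
  by (fact sum)

lemma derivation_mult: "D (a * b) = a * D b + b * D a"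
  using D by (simp add: is_derivation_def)

lemma derivation_1: "D 1 = 0"
  using derivation_mult[of 1 1] by simp

lemma derivation_scal3_mult: "D (scal3 c * a) = scal3 c * D a"
  using D unfolding is_derivation_def by blast

lemma derivation_scal3: "D (scal3 c) = 0"
  using derivation_scal3_mult[of c 1] by (simp add: derivation_1)

lemma derivation_power_mult:
  assumes "D b = 0"
  shows "D (b ^ n * a) = b ^ n * D a"
proof -
  have "D (b ^ n) = 0"
    by (induction n) (simp_all add: derivation_1 derivation_mult assms)
  then show ?thesis
    by (simp add: derivation_mult)
qed

lemma derivation_eq_0_if_vanishes_on_generators:
  assumes DX: "D X3 = 0" and DY: "D Y3 = 0" and DZ: "D Z3 = 0"
  shows "D a = 0"
proof (rule coeffs_vanish_below_all)
  fix N
  txt \<open>Up to the ideal \<open>(x\<^sup>N, y\<^sup>N, z\<^sup>N)\<close>, which \<open>D\<close> maps into itself, \<open>a\<close> is a polynomial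
    in \<open>x, y, z\<close> with scalar coefficients.\<close>
  have z_series: "coeffs_vanish_below N (D (fps_const (fps_const c)))" for c
  proof -
    have "fps_const (fps_const c) =
        (\<Sum>i<N. Z3 ^ i * scal3 (c $ i)) + Z3 ^ N * fps_const (fps_const (fps_shift N c))"
      by (subst fps_X_power_split[of c N])
        (simp add: fps_const_sum Z3_def scal3_def flip: fps_const_mult fps_const_add fps_const_power)
    then show ?thesis
      by (simp add: derivation_add derivation_sum derivation_power_mult[OF DZ] derivation_scal3
          coeffs_vanish_below_Nth_power_mult)
  qed
  have yz_series: "coeffs_vanish_below N (D (fps_const b))" for b
  proof -
    have "fps_const b =
        (\<Sum>i<N. Y3 ^ i * fps_const (fps_const (b $ i))) + Y3 ^ N * fps_const (fps_shift N b)"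
      by (subst fps_X_power_split[of b N])
        (simp add: fps_const_sum Y3_def flip: fps_const_mult fps_const_add fps_const_power)
    then show ?thesis
      by (simp add: derivation_add derivation_sum derivation_power_mult[OF DY]
          coeffs_vanish_below_add coeffs_vanish_below_sum coeffs_vanish_below_power_mult z_series
          coeffs_vanish_below_Nth_power_mult)
  qed
  have a: "a = (\<Sum>i<N. X3 ^ i * fps_const (a $ i)) + X3 ^ N * fps_shift N a"
    by (subst fps_X_power_split[of a N]) (simp add: X3_def)
  show "coeffs_vanish_below N (D a)"
    by (subst a) (simp add: derivation_add derivation_sum derivation_power_mult[OF DX]
        coeffs_vanish_below_add coeffs_vanish_below_sum coeffs_vanish_below_power_mult yz_series
        coeffs_vanish_below_Nth_power_mult)
qed

end

theorem derivation_chain_rule: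
  assumes "is_derivation D"
  shows "D a = dx a * D X3 + dy a * D Y3 + dz a * D Z3"
proof -
  define E where "E a = D a - (dx a * D X3 + dy a * D Y3 + dz a * D Z3)" for a
  have "is_derivation E"
    unfolding is_derivation_def
  proof (intro conjI allI)
    fix a b c
    show "E (a + b) = E a + E b"
      by (simp add: E_def derivation_add[OF assms] dx.add dy.add dz.add algebra_simps)
    show "E (scal3 c * a) = scal3 c * E a"
      by (simp add: E_def derivation_scal3_mult[OF assms] ring_distribs mult.assoc)
    show "E (a * b) = a * E b + b * E a"
      by (simp add: E_def derivation_mult[OF assms] algebra_simps)
  qed
  moreover have "E X3 = 0" "E Y3 = 0" "E Z3 = 0"
    by (simp_all add: E_def)
  ultimately have "E a = 0"
    by (rule derivation_eq_0_if_vanishes_on_generators)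
  then show ?thesis
    by (simp add: E_def)
qed

lemma lie_bracket_antisym:
  assumes "lie_bracket P"
  shows "P a b = - P b a"
proof -
  have self: "P c c = 0" and add_left: "P (a + b) c = P a c + P b c"
    and add_right: "P c (a + b) = P c a + P c b" for a b c
    using assms unfolding lie_bracket_def by blast+
  have "P (a + b) (a + b) = P a a + P b a + (P a b + P b b)"
    by (simp only: add_left add_right)
  then have "P a b + P b a = 0"
    by (simp add: self add.commute)
  then show ?thesis
    by (simp add: eq_neg_iff_add_eq_0)
qed

lemma poisson_triple_curl:
  assumes "poisson_triple f g h"
  shows "f * (dy h - dz g) + g * (dz f - dx h) + h * (dx g - dy f) = 0"
proof -
  obtain P where P: "poisson_bracket P" and f: "P Y3 Z3 = f" and g: "P Z3 X3 = g" and h: "P X3 Y3 = h"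
    using assms unfolding poisson_triple_def by blast
  then have lie: "lie_bracket P" and der: "is_derivation (P b)" for b
    by (simp_all add: poisson_bracket_def)
  have self: "P a a = 0" and jacobi: "P a (P b c) + P b (P c a) + P c (P a b) = 0" for a b c
    using lie unfolding lie_bracket_def by blast+
  have x: "P X3 f = dy f * h - dz f * g"
    using derivation_chain_rule[OF der, of X3 f] by (simp add: self h g lie_bracket_antisym[OF lie, of X3 Z3])
  have y: "P Y3 g = dz g * f - dx g * h"
    using derivation_chain_rule[OF der, of Y3 g] by (simp add: self f h lie_bracket_antisym[OF lie, of Y3 X3])
  have z: "P Z3 h = dx h * g - dy h * f"
    using derivation_chain_rule[OF der, of Z3 h] by (simp add: self f g lie_bracket_antisym[OF lie, of Z3 Y3])
  have "f * (dy h - dz g) + g * (dz f - dx h) + h * (dx g - dy f) = - (P X3 f + P Y3 g + P Z3 h)"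
    unfolding x y z by (simp add: algebra_simps)
  also have "\<dots> = 0"
    using jacobi[of X3 Y3 Z3] by (simp add: f g h)
  finally show ?thesis .
qed

definition eval_z0 :: "A3 \<Rightarrow> complex fps fps" where
  "eval_z0 = fps_map (fps_map (\<lambda>p. p $ 0))"

lemma eval_z0_nth: "eval_z0 a $ i $ j = coeff3 a i j 0"
  by (simp add: eval_z0_def coeff3_def)

lemma eval_z0_mult: "eval_z0 (a * b) = eval_z0 a * eval_z0 b"
proof -
  have "additive (\<lambda>p :: complex fps. p $ 0)"
    by (simp add: additive_def)
  then show ?thesis
    unfolding eval_z0_def
    by (intro fps_map_mult additive_fps_map) (simp_all add: fps_map_mult)
qed

lemma Z3_dvd_iff_eval_z0: "Z3 dvd a \<longleftrightarrow> eval_z0 a = 0"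
proof
  assume "Z3 dvd a"
  then obtain e where "a = Z3 * e" ..
  moreover have "eval_z0 Z3 = 0"
    by (simp add: fps_eq_iff eval_z0_nth coeff3_def Z3_def)
  ultimately show "eval_z0 a = 0"
    by (simp add: eval_z0_mult)
next
  assume "eval_z0 a = 0"
  then have "coeff3 a i j 0 = 0" for i j
    by (metis eval_z0_nth fps_zero_nth)
  then have "a = Z3 * fps_map (fps_map (fps_shift 1)) a"
    using coeff3_Z3_power_mult[where n = 1]
    by (intro coeff3_ext) (simp add: coeff3_def)
  then show "Z3 dvd a" ..
qed

lemma not_Z3_dvd_of_nat: "n \<noteq> 0 \<Longrightarrow> \<not> Z3 dvd of_nat n"
  by (simp add: Z3_dvd_iff_eval_z0 fps_eq_iff eval_z0_nth coeff3_def flip: fps_of_nat)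

lemma prime_elem_Z3: "prime_elem Z3"
proof -
  have "Z3 \<noteq> 0"
    by (metis dz_simps(3) dz.zero zero_neq_one)
  then show ?thesis
    unfolding prime_elem_def
    using not_Z3_dvd_of_nat[of 1] by (auto simp: Z3_dvd_iff_eval_z0 eval_z0_mult)
qed

lemma eq_0_if_Z3_powers_dvd:
  assumes "\<And>n. Z3 ^ n dvd a"
  shows "a = 0"
proof (rule coeff3_ext)
  fix i j k
  obtain e where "a = Z3 ^ Suc k * e"
    using assms ..
  then show "coeff3 a i j k = coeff3 0 i j k"
    by (simp add: coeff3_Z3_power_mult del: power_Suc) (simp add: coeff3_def)
qed

lemma dz_Z3_power: "dz (Z3 ^ Suc n) = of_nat (Suc n) * Z3 ^ n"
proof (induction n)
  case 0
  show ?case by simp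
next
  case (Suc n)
  have "dz (Z3 ^ Suc (Suc n)) = Z3 * dz (Z3 ^ Suc n) + Z3 ^ Suc n"
    by (simp only: power_Suc[of Z3 "Suc n"] dz_mult dz_simps mult_1_right)
  then show ?case
    unfolding Suc.IH by (simp add: algebra_simps)
qed

lemma dx_Z3_power: "dx (Z3 ^ n) = 0"
  by (induction n) simp_all

lemma dy_Z3_power: "dy (Z3 ^ n) = 0"
  by (induction n) simp_all

lemma transport_solution_eq_0:
  assumes eq: "f * dz d + u * dx d + w * dy d + v * d = 0"
    and f: "\<not> Z3 dvd f" and d: "Z3 dvd d"
  shows "d = 0"
proof (rule eq_0_if_Z3_powers_dvd)
  have "Z3 ^ Suc m dvd d" for m
  proof (induction m)
    case 0
    show ?case using d by simp
  next
    case (Suc m)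
    then obtain e where e: "d = Z3 ^ Suc m * e" ..
    let ?r = "f * dz e + u * dx e + w * dy e + v * e"
    have dz_d: "dz d = Z3 ^ m * (of_nat (Suc m) * e + Z3 * dz e)"
      unfolding e dz_mult dz_Z3_power by (simp add: algebra_simps)
    have dx_d: "dx d = Z3 ^ Suc m * dx e" and dy_d: "dy d = Z3 ^ Suc m * dy e"
      unfolding e dx_mult dx_Z3_power dy_mult dy_Z3_power by simp_all
    have "f * dz d + u * dx d + w * dy d + v * d = Z3 ^ m * (of_nat (Suc m) * f * e + Z3 * ?r)"
      unfolding dz_d dx_d dy_d by (subst e) (simp add: algebra_simps)
    then have "Z3 ^ m * (of_nat (Suc m) * f * e + Z3 * ?r) = 0"
      using eq by simp
    then have "of_nat (Suc m) * f * e + Z3 * ?r = 0"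
      using prime_elem_not_zeroI[OF prime_elem_Z3] by simp
    then have "Z3 dvd of_nat (Suc m) * f * e"
      by (metis dvd_0_right dvd_add_left_iff dvd_triv_left)
    then have "Z3 dvd e"
      using prime_elem_Z3 f not_Z3_dvd_of_nat[of "Suc m"] by (simp add: prime_elem_dvd_mult_iff)
    then show ?case
      using e by (auto simp: mult.assoc)
  qed
  then show "Z3 ^ n dvd d" for n
    by (meson dvd_trans le_imp_power_dvd lessI less_imp_le_nat)
qed

theorem lemma2p2:
  fixes f g h f' g' h' :: A3
  assumes "poisson_triple f g h"
    and "poisson_triple f' g' h'"
    and "coeff3 f 0 0 0 \<noteq> 0"
    and "\<forall>i j k. coeff3 f i j k = coeff3 f' i j k"
    and "\<forall>i j k. coeff3 h i j k = coeff3 h' i j k"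
    and "\<forall>i j. coeff3 g i j 0 = coeff3 g' i j 0"
  shows "(f, g, h) = (f', g', h')"
proof -
  have f': "f' = f" and h': "h' = h"
    using assms(4,5) by (metis coeff3_ext)+
  define d where "d = g - g'"
  have "f * dz d + (- h) * dx d + 0 * dy d + (dx h - dz f) * d
      = (f * (dy h - dz g') + g' * (dz f - dx h) + h * (dx g' - dy f))
        - (f * (dy h - dz g) + g * (dz f - dx h) + h * (dx g - dy f))"
    by (simp add: d_def dx.diff dz.diff algebra_simps)
  also have "\<dots> = 0"
    using poisson_triple_curl[OF assms(1)] poisson_triple_curl[OF assms(2)] by (simp add: f' h')
  finally have "f * dz d + (- h) * dx d + 0 * dy d + (dx h - dz f) * d = 0" .
  moreover have "\<not> Z3 dvd f"
    using assms(3) by (metis Z3_dvd_iff_eval_z0 eval_z0_nth fps_zero_nth)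
  moreover have "Z3 dvd d"
    using assms(6) by (simp add: Z3_dvd_iff_eval_z0 fps_eq_iff eval_z0_nth d_def coeff3_def)
  ultimately have "d = 0"
    by (rule transport_solution_eq_0)
  with f' h' show ?thesis
    by (simp add: d_def)
qed

end
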